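(* Consider a restless bandit, set system $(N^{\{0,1\}},\mathcal F)$ as in the context, suppose the bandit is PCL-indexable relative to $b^u$ and $\mathcal F$-policies, with the adaptive-greedy algorithm on input $\widehat{\mathbf h}^0_{N^{\{0,1\}}}$ producing $\boldsymbol\pi$ and $\boldsymbol\nu$, and let $S_k=\{\pi_k,\dots,\pi_n\}$. Suppose further that $w^S_j\le w^T_j$ whenever $j\in S\subset T$ with $S,T\in\mathcal F$. Then for every $j\in N^{\{0,1\}}$, $$\nu_j=\max\left\{\frac{v^{S\setminus\{j\}}_j-v^S_j}{b^S_j-b^{S\setminus\{j\}}_j}:j\in S\in\{S_1,\dots,S_n\}\right\}.$$
   Context: Restless bandit: finite state space $N=N^{\{0,1\}}\cup N^{\{1\}}$ (disjoint); actions $a\in\{0,1\}$; one-period costs $h^a_i$, transition probabilities $p^a_{ij}$ with $p^1_{ij}=p^0_{ij}$ for $i\in N^{\{1\}}$; discount factor $\beta\in(0,1)$; activity weights $\theta^1_j>0$. Stationary policies $u:N\to[0,1]$ with $u(i)=1$ on $N^{\{1\}}$. $v^u_i=E^u_i[\sum_{t\ge0}h^{a(t)}_{X(t)}\beta^t]$, $b^u_i=E^u_i[\sum_{t\ge0}\theta^1_{X(t)}a(t)\beta^t]$. For $S\subseteq N^{\{0,1\}}$ the $S$-active policy is active on $S\cup N^{\{1\}}$, passive elsewhere; $v^S_i,b^S_i$ its measures. Marginal workloads $w^S_i=\theta^1_i1\{i\in N^{\{0,1\}}\}+\beta\sum_j(p^1_{ij}-p^0_{ij})b^S_j$. $\widehat{\mathbf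 h}^0=\mathbf h^0-(\mathbf I-\beta\mathbf P^0)(\mathbf I-\beta\mathbf P^1)^{-1}\mathbf h^1$. $\mathcal F\subseteq2^{N^{\{0,1\}}}$: $\emptyset\in\mathcal F$; each nonempty $S\in\mathcal F$ has nonempty $\partial^-S=\{j\in S:S\setminus\{j\}\in\mathcal F\}$; each $S\in\mathcal F$ other than $N^{\{0,1\}}$ has $j\notin S$ with $S\cup\{j\}\in\mathcal F$. Adaptive-greedy algorithm on input $\mathbf c$, $n=|N^{\{0,1\}}|$: $S_1=N^{\{0,1\}}$, $y^{S_1}=\min\{c_j/w^{S_1}_j:j\in\partial^-S_1\}$, $\pi_1$ a minimizer, $\nu_{\pi_1}=y^{S_1}$; for $k=2..n$: $S_k=S_{k-1}\setminus\{\pi_{k-1}\}$, $y^{S_k}=\min\{(c_j-\sum_{l<k}y^{S_l}w^{S_l}_j)/w^{S_k}_j:j\in\partial^-S_k\}$, $\pi_k$ a minimizer, $\nu_{\pi_k}=\nu_{\pi_{k-1}}+y^{S_k}$. PCL-indexability: (i) $w^S_j>0$ for $S\in\mathcal F$, $j\in N^{\{0,1\}}$; (ii) on input $(\widehat h^0_j)_{j\in N^{\{0,1\}}}$ the output satisfies $\nu_{\pi_1}\le\cdots\le\nu_{\pi_n}$. *)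

theory Defs
  imports "HOL-Analysis.Analysis"
begin

text \<open>State space: a finite type 's.  N1 is the set of states where only the
active action is available (N^{1}); its complement -N1 is N^{0,1}.
Actions: True = active (1), False = passive (0).\<close>

fun mpow :: "('s::finite \<Rightarrow> 's \<Rightarrow> real) \<Rightarrow> nat \<Rightarrow> 's \<Rightarrow> 's \<Rightarrow> real" where
  "mpow Q 0 i j = (if i = j then 1 else 0)"
| "mpow Q (Suc t) i j = (\<Sum>k\<in>UNIV. Q i k * mpow Q t k j)"

definition disc_val :: "real \<Rightarrow> ('s::finite \<Rightarrow> 's \<Rightarrow> real) \<Rightarrow> ('s \<Rightarrow> real) \<Rightarrow> 's \<Rightarrow> real" where
  "disc_val \<beta> Q r i = (\<Sum>t. \<beta> ^ t * (\<Sum>j\<in>UNIV. mpow Q t i j * r j))"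

definition polP :: "('s \<Rightarrow> 's \<Rightarrow> real) \<Rightarrow> ('s \<Rightarrow> 's \<Rightarrow> real) \<Rightarrow> 's set \<Rightarrow> 's set \<Rightarrow> 's \<Rightarrow> 's \<Rightarrow> real" where
  "polP P0 P1 N1 S i j = (if i \<in> S \<union> N1 then P1 i j else P0 i j)"

definition vS :: "real \<Rightarrow> ('s::finite \<Rightarrow> 's \<Rightarrow> real) \<Rightarrow> ('s \<Rightarrow> 's \<Rightarrow> real) \<Rightarrow> ('s \<Rightarrow> real) \<Rightarrow> ('s \<Rightarrow> real)
     \<Rightarrow> 's set \<Rightarrow> 's set \<Rightarrow> 's \<Rightarrow> real" where
  "vS \<beta> P0 P1 h0 h1 N1 S i =
     disc_val \<beta> (polP P0 P1 N1 S) (\<lambda>j. if j \<in> S \<union> N1 then h1 j else h0 j) i"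

definition bS :: "real \<Rightarrow> ('s::finite \<Rightarrow> 's \<Rightarrow> real) \<Rightarrow> ('s \<Rightarrow> 's \<Rightarrow> real) \<Rightarrow> ('s \<Rightarrow> real)
     \<Rightarrow> 's set \<Rightarrow> 's set \<Rightarrow> 's \<Rightarrow> real" where
  "bS \<beta> P0 P1 \<theta> N1 S i =
     disc_val \<beta> (polP P0 P1 N1 S) (\<lambda>j. if j \<in> S \<union> N1 then \<theta> j else 0) i"

definition wS :: "real \<Rightarrow> ('s::finite \<Rightarrow> 's \<Rightarrow> real) \<Rightarrow> ('s \<Rightarrow> 's \<Rightarrow> real) \<Rightarrow> ('s \<Rightarrow> real)
     \<Rightarrow> 's set \<Rightarrow> 's set \<Rightarrow> 's \<Rightarrow> real" where
  "wS \<beta> P0 P1 \<theta> N1 S i =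
     (if i \<notin> N1 then \<theta> i else 0)
     + \<beta> * (\<Sum>j\<in>UNIV. (P1 i j - P0 i j) * bS \<beta> P0 P1 \<theta> N1 S j)"

text \<open>hhat^0 = h^0 - (I - beta P^0)(I - beta P^1)^{-1} h^1, where
 (I - beta P^1)^{-1} h^1 = sum_t beta^t (P^1)^t h^1 (Neumann series).\<close>
definition hhat0 :: "real \<Rightarrow> ('s::finite \<Rightarrow> 's \<Rightarrow> real) \<Rightarrow> ('s \<Rightarrow> 's \<Rightarrow> real) \<Rightarrow> ('s \<Rightarrow> real)
     \<Rightarrow> ('s \<Rightarrow> real) \<Rightarrow> 's \<Rightarrow> real" where
  "hhat0 \<beta> P0 P1 h0 h1 i =
     (let g = disc_val \<beta> P1 h1 in h0 i - (g i - \<beta> * (\<Sum>j\<in>UNIV. P0 i j * g j)))"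

definition set_system :: "'s set \<Rightarrow> 's set set \<Rightarrow> bool" where
  "set_system N F \<longleftrightarrow> F \<subseteq> Pow N \<and> {} \<in> F
     \<and> (\<forall>S\<in>F. S \<noteq> {} \<longrightarrow> (\<exists>j\<in>S. S - {j} \<in> F))
     \<and> (\<forall>S\<in>F. S \<noteq> N \<longrightarrow> (\<exists>j\<in>N - S. insert j S \<in> F))"

definition bdry :: "'s set set \<Rightarrow> 's set \<Rightarrow> 's set" where
  "bdry F S = {j \<in> S. S - {j} \<in> F}"

text \<open>(pi, nu) is an output of the adaptive-greedy algorithm on input c
 (indices k = 1..n, n = card N, S_k = N - {pi_1,...,pi_{k-1}}).\<close>
definition AG_output :: "'s set \<Rightarrow> 's set set \<Rightarrow> ('s set \<Rightarrow> 's \<Rightarrow> real) \<Rightarrow> ('s \<Rightarrow> real)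
     \<Rightarrow> (nat \<Rightarrow> 's) \<Rightarrow> ('s \<Rightarrow> real) \<Rightarrow> bool" where
  "AG_output N F w c \<pi> \<nu> \<longleftrightarrow>
     (let n = card N; Sk = (\<lambda>k. N - \<pi> ` {1..<k}) in
      \<exists>y :: nat \<Rightarrow> real.
        (\<forall>k\<in>{1..n}.
           \<pi> k \<in> bdry F (Sk k)
         \<and> y k = (c (\<pi> k) - (\<Sum>l\<in>{1..<k}. y l * w (Sk l) (\<pi> k))) / w (Sk k) (\<pi> k)
         \<and> (\<forall>j\<in>bdry F (Sk k).
               y k \<le> (c j - (\<Sum>l\<in>{1..<k}. y l * w (Sk l) j)) / w (Sk k) j)
         \<and> \<nu> (\<pi> k) = (\<Sum>l\<in>{1..k}. y l)))"

end

theory Submission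
  imports Defs
begin

text \<open>For i \<in> S the differences v^S - v^(S-{i}) and b^S - b^(S-{i}) solve the same
  discounted equation, that of the (S-{i})-active policy, with sources -c^S_i and w^S_i
  concentrated at i, where c^S is the marginal cost. By uniqueness of solutions they are
  proportional: the rate in the theorem equals c^S_i / w^S_i, and removing i from S leaves the
  reduced costs c^S_j - (c^S_i / w^S_i) w^S_j unchanged. Since hhat^0 = c^N, the adaptive-greedy
  algorithm thus runs on reduced costs, and by induction \<nu>(\<pi>_k) = c^(S_k)_j / w^(S_k)_j
  for j = \<pi>_k. Going back from S_k to S_m, m \<le> k, each removal of \<pi>_l changes
  c^S_j - \<nu>(j) w^S_j by (\<nu>(\<pi>_l) - \<nu>(j)) (w^(S_l)_j - w^(S_(l+1))_j) \<le> 0, by the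
  monotonicity of the indices and of the workloads. So every rate at an S_m containing j is at
  most \<nu>(j), with equality at S_k.\<close>

lemma mpow_Suc_mult:
  "(\<Sum>j\<in>UNIV. mpow Q (Suc t) i j * r j) = (\<Sum>k\<in>UNIV. Q i k * (\<Sum>j\<in>UNIV. mpow Q t k j * r j))"
  by (simp add: sum_distrib_left sum_distrib_right mult.assoc) (rule sum.swap)

lemma stochastic_row_abs_le:
  fixes p r :: "'s::finite \<Rightarrow> real"
  assumes "\<And>j. 0 \<le> p j" and "(\<Sum>j\<in>UNIV. p j) = 1"
  shows "\<bar>\<Sum>j\<in>UNIV. p j * r j\<bar> \<le> (\<Sum>j\<in>UNIV. \<bar>r j\<bar>)"
proof -
  have "\<bar>\<Sum>j\<in>UNIV. p j * r j\<bar> \<le> (\<Sum>j\<in>UNIV. p j * (\<Sum>k\<in>UNIV. \<bar>r k\<bar>))"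
    by (rule order_trans[OF sum_abs])
       (auto simp: abs_mult assms(1) intro!: sum_mono mult_left_mono member_le_sum)
  also have "\<dots> = (\<Sum>k\<in>UNIV. \<bar>r k\<bar>)"
    by (simp add: sum_distrib_right[symmetric] assms(2))
  finally show ?thesis .
qed

locale discounted_chain =
  fixes Q :: "'s::finite \<Rightarrow> 's \<Rightarrow> real" and \<beta> :: real
  assumes nonneg: "\<And>i j. 0 \<le> Q i j" and stoch: "\<And>i. (\<Sum>j\<in>UNIV. Q i j) = 1"
    and beta: "0 \<le> \<beta>" "\<beta> < 1"
begin

lemma mpow_nonneg: "0 \<le> mpow Q t i j"
  by (induction t arbitrary: i) (auto intro!: sum_nonneg mult_nonneg_nonneg nonneg)

lemma mpow_row_sum: "(\<Sum>j\<in>UNIV. mpow Q t i j) = 1"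
proof (induction t arbitrary: i)
  case (Suc t)
  then show ?case
    using mpow_Suc_mult[of Q t i "\<lambda>_. 1"] by (simp add: stoch)
qed simp

lemma disc_val_summable: "summable (\<lambda>t. \<beta> ^ t * (\<Sum>j\<in>UNIV. mpow Q t i j * r j))"
proof (rule summable_comparison_test)
  show "summable (\<lambda>t. \<beta> ^ t * (\<Sum>j\<in>UNIV. \<bar>r j\<bar>))"
    using beta by (intro summable_mult2) simp
  show "\<exists>N. \<forall>t\<ge>N. norm (\<beta> ^ t * (\<Sum>j\<in>UNIV. mpow Q t i j * r j)) \<le> \<beta> ^ t * (\<Sum>j\<in>UNIV. \<bar>r j\<bar>)"
    using beta(1)
    by (auto simp: abs_mult mpow_nonneg mpow_row_sum intro!: mult_left_mono stochastic_row_abs_le)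
qed

lemma disc_val_bellman:
  "disc_val \<beta> Q r i = r i + \<beta> * (\<Sum>k\<in>UNIV. Q i k * disc_val \<beta> Q r k)"
proof -
  define s where "s i t = \<beta> ^ t * (\<Sum>j\<in>UNIV. mpow Q t i j * r j)" for i t
  have summable: "summable (s i)" for i
    unfolding s_def by (rule disc_val_summable)
  have head: "s i 0 = r i"
    by (simp add: s_def if_distrib[of "\<lambda>c. c * _"] cong: if_cong)
  have tail: "s i (Suc t) = \<beta> * (\<Sum>k\<in>UNIV. Q i k * s k t)" for t
    unfolding s_def mpow_Suc_mult by (simp add: sum_distrib_left mult_ac)
  have disc_val_eq: "disc_val \<beta> Q r k = suminf (s k)" for k
    by (simp add: disc_val_def s_def[abs_def])
  have "disc_val \<beta> Q r i = s i 0 + (\<Sum>t. s i (Suc t))"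
    using suminf_split_head[OF summable[of i]] by (simp add: disc_val_eq)
  also have "(\<Sum>t. s i (Suc t)) = \<beta> * (\<Sum>t. \<Sum>k\<in>UNIV. Q i k * s k t)"
    by (simp add: tail suminf_mult summable summable_mult summable_sum)
  also have "(\<Sum>t. \<Sum>k\<in>UNIV. Q i k * s k t) = (\<Sum>k\<in>UNIV. Q i k * suminf (s k))"
    by (simp add: suminf_sum suminf_mult summable summable_mult)
  finally show ?thesis
    by (simp only: head disc_val_eq)
qed

text \<open>Maximum principle: at a maximum point of \<open>x\<close> the maximum is at most \<open>\<beta>\<close> times itself.\<close>
lemma subsolution_nonpos:
  assumes sub: "\<And>k. x k \<le> \<beta> * (\<Sum>l\<in>UNIV. Q k l * x l)"
  shows "x k \<le> 0"
proof -
  define M where "M = Max (range x)"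
  have le_M: "x l \<le> M" for l
    unfolding M_def by (rule Max_ge) auto
  have "M \<in> range x"
    unfolding M_def by (rule Max_in) auto
  then obtain k0 where k0: "x k0 = M"
    by auto
  have "(\<Sum>l\<in>UNIV. Q k0 l * x l) \<le> (\<Sum>l\<in>UNIV. Q k0 l * M)"
    by (intro sum_mono mult_left_mono le_M nonneg)
  also have "\<dots> = M"
    by (simp add: sum_distrib_right[symmetric] stoch)
  finally have "M \<le> \<beta> * M"
    using sub[of k0] k0 beta(1) by (metis mult_left_mono order_trans)
  then have "M \<le> 0"
    using beta(2) by (smt (verit) mult_less_cancel_right2)
  then show ?thesis
    using le_M[of k] by simp
qed

lemma fixpoint_zero:
  assumes fixpoint: "\<And>k. x k = \<beta> * (\<Sum>l\<in>UNIV. Q k l * x l)"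
  shows "x k = 0"
proof -
  have "x k \<le> 0"
    by (rule subsolution_nonpos) (rule eq_refl, rule fixpoint)
  moreover have "- x k \<le> 0"
  proof (rule subsolution_nonpos)
    show "- x l \<le> \<beta> * (\<Sum>m\<in>UNIV. Q l m * - x m)" for l
      using fixpoint[of l] by (simp add: sum_negf)
  qed
  ultimately show ?thesis
    by simp
qed

lemma solution_ge_source:
  assumes a_nonneg: "\<And>k. 0 \<le> a k"
    and x: "\<And>k. x k = a k + \<beta> * (\<Sum>l\<in>UNIV. Q k l * x l)"
  shows "a k \<le> x k"
proof -
  have "- x l \<le> 0" for l
  proof (rule subsolution_nonpos)
    show "- x k \<le> \<beta> * (\<Sum>l\<in>UNIV. Q k l * - x l)" for k
      using x[of k] a_nonneg[of k] by (simp add: sum_negf)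
  qed
  then have "0 \<le> \<beta> * (\<Sum>l\<in>UNIV. Q k l * x l)"
    using beta(1) nonneg by (simp add: sum_nonneg)
  then show ?thesis
    using x[of k] by simp
qed

end

lemma discounted_equation_diff:
  fixes X Y r r' :: "'s::finite \<Rightarrow> real" and A B :: "'s \<Rightarrow> 's \<Rightarrow> real"
  assumes X: "\<And>k. X k = r k + \<beta> * (\<Sum>l\<in>UNIV. A k l * X l)"
    and Y: "\<And>k. Y k = r' k + \<beta> * (\<Sum>l\<in>UNIV. B k l * Y l)"
  shows "X k - Y k = (r k - r' k + \<beta> * (\<Sum>l\<in>UNIV. (A k l - B k l) * X l))
           + \<beta> * (\<Sum>l\<in>UNIV. B k l * (X l - Y l))"
proof -
  have "(\<Sum>l\<in>UNIV. A k l * X l) - (\<Sum>l\<in>UNIV. B k l * Y l)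
      = (\<Sum>l\<in>UNIV. A k l * X l - B k l * Y l)"
    by (rule sum_subtractf[symmetric])
  also have "\<dots> = (\<Sum>l\<in>UNIV. (A k l - B k l) * X l + B k l * (X l - Y l))"
    by (rule sum.cong) (simp_all add: algebra_simps)
  also have "\<dots> = (\<Sum>l\<in>UNIV. (A k l - B k l) * X l) + (\<Sum>l\<in>UNIV. B k l * (X l - Y l))"
    by (rule sum.distrib)
  finally have "(\<Sum>l\<in>UNIV. A k l * X l) - (\<Sum>l\<in>UNIV. B k l * Y l)
      = (\<Sum>l\<in>UNIV. (A k l - B k l) * X l) + (\<Sum>l\<in>UNIV. B k l * (X l - Y l))" .
  then show ?thesis
    using X[of k] Y[of k] by (simp add: algebra_simps)
qed

locale restless_bandit =
  P0: discounted_chain P0 \<beta> + P1: discounted_chain P1 \<beta>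
  for P0 P1 :: "'s::finite \<Rightarrow> 's \<Rightarrow> real" and \<beta> :: real +
  fixes h0 h1 \<theta> :: "'s \<Rightarrow> real" and N1 :: "'s set"
begin

abbreviation "P S \<equiv> polP P0 P1 N1 S"
abbreviation "v S \<equiv> vS \<beta> P0 P1 h0 h1 N1 S"
abbreviation "b S \<equiv> bS \<beta> P0 P1 \<theta> N1 S"
abbreviation "w S \<equiv> wS \<beta> P0 P1 \<theta> N1 S"

definition marginal_cost :: "'s set \<Rightarrow> 's \<Rightarrow> real" where
  "marginal_cost S j = h0 j - h1 j - \<beta> * (\<Sum>k\<in>UNIV. (P1 j k - P0 j k) * v S k)"

lemma discounted_chain_polP: "discounted_chain (P S) \<beta>"
proof
  show "0 \<le> P S i j" for i j
    unfolding polP_def using P0.nonneg P1.nonneg by auto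
  show "(\<Sum>j\<in>UNIV. P S i j) = 1" for i
    by (cases "i \<in> S \<union> N1") (auto simp: polP_def P0.stoch P1.stoch)
qed (use P0.beta in auto)

lemma vS_bellman:
  "v S i = (if i \<in> S \<union> N1 then h1 i else h0 i) + \<beta> * (\<Sum>k\<in>UNIV. P S i k * v S k)"
  unfolding vS_def by (subst discounted_chain.disc_val_bellman[OF discounted_chain_polP]) simp

lemma bS_bellman:
  "b S i = (if i \<in> S \<union> N1 then \<theta> i else 0) + \<beta> * (\<Sum>k\<in>UNIV. P S i k * b S k)"
  unfolding bS_def by (subst discounted_chain.disc_val_bellman[OF discounted_chain_polP]) simp

context
  fixes S i
  assumes i_in_S: "i \<in> S" and i_notin_N1: "i \<notin> N1"
begin

lemma vS_remove_diff:
  "v S k - v (S - {i}) k = (if k = i then - marginal_cost S i else 0)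
     + \<beta> * (\<Sum>l\<in>UNIV. P (S - {i}) k l * (v S l - v (S - {i}) l))"
  using i_in_S i_notin_N1
  by (subst discounted_equation_diff[OF vS_bellman vS_bellman])
     (auto simp: polP_def marginal_cost_def algebra_simps)

lemma bS_remove_diff:
  "b S k - b (S - {i}) k = (if k = i then w S i else 0)
     + \<beta> * (\<Sum>l\<in>UNIV. P (S - {i}) k l * (b S l - b (S - {i}) l))"
  using i_in_S i_notin_N1
  by (subst discounted_equation_diff[OF bS_bellman bS_bellman])
     (auto simp: polP_def wS_def algebra_simps)

lemma remove_diff_balance:
  "w S i * (v S k - v (S - {i}) k) + marginal_cost S i * (b S k - b (S - {i}) k) = 0"
proof (rule discounted_chain.fixpoint_zero[OF discounted_chain_polP])
  define Dv where "Dv l = v S l - v (S - {i}) l" for l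
  define Db where "Db l = b S l - b (S - {i}) l" for l
  fix k
  have "(\<Sum>l\<in>UNIV. P (S - {i}) k l * (w S i * Dv l + marginal_cost S i * Db l))
      = w S i * (\<Sum>l\<in>UNIV. P (S - {i}) k l * Dv l)
        + marginal_cost S i * (\<Sum>l\<in>UNIV. P (S - {i}) k l * Db l)"
    by (simp add: sum.distrib sum_distrib_left algebra_simps)
  then show "w S i * Dv k + marginal_cost S i * Db k =
      \<beta> * (\<Sum>l\<in>UNIV. P (S - {i}) k l * (w S i * Dv l + marginal_cost S i * Db l))"
    using vS_remove_diff[of k, folded Dv_def] bS_remove_diff[of k, folded Db_def]
    by (simp add: algebra_simps)
qed

lemma wS_le_bS_remove_diff:
  assumes "0 \<le> w S i"
  shows "w S i \<le> b S i - b (S - {i}) i"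
proof -
  have "(if i = i then w S i else 0) \<le> b S i - b (S - {i}) i"
  proof (rule discounted_chain.solution_ge_source[OF discounted_chain_polP, where
        a = "\<lambda>k. if k = i then w S i else 0" and x = "\<lambda>k. b S k - b (S - {i}) k" and k = i])
    show "0 \<le> (if k = i then w S i else 0)" for k
      using assms by simp
    show "b S k - b (S - {i}) k = (if k = i then w S i else 0)
        + \<beta> * (\<Sum>l\<in>UNIV. P (S - {i}) k l * (b S l - b (S - {i}) l))" for k
      by (rule bS_remove_diff)
  qed
  then show ?thesis
    by simp
qed

lemma marginal_rate_eq:
  assumes "0 < w S i"
  shows "(v (S - {i}) i - v S i) / (b S i - b (S - {i}) i) = marginal_cost S i / w S i"
proof -
  have "0 < b S i - b (S - {i}) i"
    using wS_le_bS_remove_diff assms by fastforce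
  then show ?thesis
    using remove_diff_balance[of i] assms by (simp add: field_simps)
qed

lemma marginal_cost_remove:
  assumes "w S i \<noteq> 0"
  shows "marginal_cost S j - marginal_cost S i / w S i * w S j
       = marginal_cost (S - {i}) j - marginal_cost S i / w S i * w (S - {i}) j"
proof -
  let ?r = "marginal_cost S i / w S i"
  have v_diff: "v S k - v (S - {i}) k = - ?r * (b S k - b (S - {i}) k)" for k
    using remove_diff_balance[of k] assms by (simp add: field_simps)
  have "marginal_cost S j - marginal_cost (S - {i}) j
      = - \<beta> * (\<Sum>k\<in>UNIV. (P1 j k - P0 j k) * (v S k - v (S - {i}) k))"
    by (simp add: marginal_cost_def sum_subtractf right_diff_distrib)
  also have "\<dots> = ?r * (\<beta> * (\<Sum>k\<in>UNIV. (P1 j k - P0 j k) * (b S k - b (S - {i}) k)))"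
    by (simp add: v_diff sum_distrib_left mult_ac)
  also have "\<dots> = ?r * (w S j - w (S - {i}) j)"
    by (simp add: wS_def sum_subtractf right_diff_distrib)
  finally show ?thesis
    by (simp add: algebra_simps)
qed

end

lemma hhat0_eq_marginal_cost: "hhat0 \<beta> P0 P1 h0 h1 = marginal_cost (- N1)"
proof
  fix j
  define g where "g = disc_val \<beta> P1 h1"
  have "P (- N1) = P1"
    by (auto simp: polP_def fun_eq_iff)
  then have v_full: "v (- N1) = g"
    unfolding vS_def g_def by (simp cong: if_cong)
  have g_bellman: "g j = h1 j + \<beta> * (\<Sum>k\<in>UNIV. P1 j k * g k)"
    unfolding g_def by (rule P1.disc_val_bellman)
  have "\<beta> * (\<Sum>k\<in>UNIV. (P1 j k - P0 j k) * g k)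
      = \<beta> * (\<Sum>k\<in>UNIV. P1 j k * g k) - \<beta> * (\<Sum>k\<in>UNIV. P0 j k * g k)"
    by (simp add: left_diff_distrib sum_subtractf right_diff_distrib)
  then show "hhat0 \<beta> P0 P1 h0 h1 j = marginal_cost (- N1) j"
    unfolding hhat0_def marginal_cost_def v_full Let_def g_def[symmetric]
    using g_bellman by linarith
qed

end

lemma set_system_ground_mem:
  assumes "finite N" and "set_system N F"
  shows "N \<in> F"
proof -
  have sub: "F \<subseteq> Pow N" and empty: "{} \<in> F"
    and extend: "\<And>S. S \<in> F \<Longrightarrow> S \<noteq> N \<Longrightarrow> \<exists>j\<in>N - S. insert j S \<in> F"
    using assms(2) unfolding set_system_def by auto
  have "S \<in> F \<Longrightarrow> card (N - S) = m \<Longrightarrow> N \<in> F" for S m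
  proof (induction m arbitrary: S)
    case 0
    then show ?case
      using sub assms(1) by (metis Diff_eq_empty_iff PowD card_0_eq finite_Diff subset_antisym subsetD)
  next
    case (Suc m)
    then obtain j where j: "j \<in> N - S" "insert j S \<in> F"
      using extend by (metis card_0_eq Diff_cancel nat.distinct(1) finite_Diff assms(1))
    then have "card (N - insert j S) = m"
      using Suc.prems(2) assms(1) by (simp add: Diff_insert2[symmetric])
    then show ?case
      using Suc.IH j(2) by blast
  qed
  then show ?thesis
    using empty by blast
qed

locale adaptive_greedy =
  fixes N :: "'s set" and F :: "'s set set" and w :: "'s set \<Rightarrow> 's \<Rightarrow> real"
    and c :: "'s \<Rightarrow> real" and \<pi> :: "nat \<Rightarrow> 's" and \<nu> :: "'s \<Rightarrow> real"
  assumes finite_N: "finite N" and set_system: "set_system N F"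
    and AG: "AG_output N F w c \<pi> \<nu>"
begin

definition Sk :: "nat \<Rightarrow> 's set" where
  "Sk k = N - \<pi> ` {1..<k}"

lemma output_increments:
  obtains y where
    "\<And>k. k \<in> {1..card N} \<Longrightarrow> \<pi> k \<in> bdry F (Sk k)"
    "\<And>k. k \<in> {1..card N} \<Longrightarrow>
       y k = (c (\<pi> k) - (\<Sum>l\<in>{1..<k}. y l * w (Sk l) (\<pi> k))) / w (Sk k) (\<pi> k)"
    "\<And>k. k \<in> {1..card N} \<Longrightarrow> \<nu> (\<pi> k) = (\<Sum>l\<in>{1..k}. y l)"
  using AG unfolding AG_output_def Let_def Sk_def by blast

lemma pi_mem_Sk: "k \<in> {1..card N} \<Longrightarrow> \<pi> k \<in> Sk k"
  using output_increments by (metis (no_types, lifting) bdry_def mem_Collect_eq)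

lemma Sk_remove_mem_F: "k \<in> {1..card N} \<Longrightarrow> Sk k - {\<pi> k} \<in> F"
  using output_increments by (metis (no_types, lifting) bdry_def mem_Collect_eq)

lemma Sk_Suc: "1 \<le> k \<Longrightarrow> Sk (Suc k) = Sk k - {\<pi> k}"
  by (auto simp: Sk_def atLeastLessThanSuc)

lemma Sk_subset: "Sk k \<subseteq> N"
  by (auto simp: Sk_def)

lemma pi_mem: "k \<in> {1..card N} \<Longrightarrow> \<pi> k \<in> N"
  using pi_mem_Sk Sk_subset by blast

lemma Sk_mem_F: "k \<in> {1..card N} \<Longrightarrow> Sk k \<in> F"
proof (induction k)
  case (Suc k)
  show ?case
  proof (cases "k = 0")
    case True
    then show ?thesis
      using set_system_ground_mem[OF finite_N set_system] by (simp add: Sk_def)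
  next
    case False
    then show ?thesis
      using Suc.prems Sk_remove_mem_F[of k] Sk_Suc[of k] by simp
  qed
qed simp

lemma pi_mem_Sk_iff:
  assumes "k \<in> {1..card N}" and "m \<in> {1..card N}"
  shows "\<pi> k \<in> Sk m \<longleftrightarrow> m \<le> k"
proof
  assume "\<pi> k \<in> Sk m"
  then show "m \<le> k"
    using assms(1) by (auto simp: Sk_def)
next
  assume "m \<le> k"
  have distinct: "\<pi> l \<noteq> \<pi> k" if "l \<in> {1..<m}" for l
  proof -
    have "\<pi> l \<in> \<pi> ` {1..<k}"
      using that \<open>m \<le> k\<close> by auto
    then show ?thesis
      using pi_mem_Sk[OF assms(1)] by (auto simp: Sk_def)
  qed
  then have "\<pi> k \<notin> \<pi> ` {1..<m}"
    by (metis imageE)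
  moreover have "\<pi> k \<in> N"
    using pi_mem_Sk[OF assms(1)] Sk_subset by blast
  ultimately show "\<pi> k \<in> Sk m"
    by (simp add: Sk_def)
qed

lemma image_pi: "\<pi> ` {1..card N} = N"
proof (rule card_subset_eq[OF finite_N])
  show "\<pi> ` {1..card N} \<subseteq> N"
    using pi_mem_Sk Sk_subset by blast
  have "inj_on \<pi> {1..card N}"
    by (metis inj_onI linorder_le_cases pi_mem_Sk_iff order_antisym)
  then show "card (\<pi> ` {1..card N}) = card N"
    by (simp add: card_image)
qed

lemma Sk_eq_image:
  assumes "m \<in> {1..card N}"
  shows "Sk m = \<pi> ` {m..card N}"
proof
  show "Sk m \<subseteq> \<pi> ` {m..card N}"
  proof
    fix x
    assume x: "x \<in> Sk m"
    then obtain k where "k \<in> {1..card N}" "x = \<pi> k"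
      using Sk_subset image_pi by blast
    then show "x \<in> \<pi> ` {m..card N}"
      using x assms pi_mem_Sk_iff by auto
  qed
  show "\<pi> ` {m..card N} \<subseteq> Sk m"
    using assms pi_mem_Sk_iff by auto
qed


lemma image_pi_from_mem_F: "m \<in> {1..card N} \<Longrightarrow> \<pi> ` {m..card N} \<in> F"
  using Sk_eq_image Sk_mem_F by metis

end

locale adaptive_greedy_marginal = adaptive_greedy N F w "C N" \<pi> \<nu>
  for N F w and C :: "'s set \<Rightarrow> 's \<Rightarrow> real" and \<pi> \<nu> +
  assumes w_pos: "\<And>S j. S \<in> F \<Longrightarrow> j \<in> N \<Longrightarrow> 0 < w S j"
    and reduced_cost_remove: "\<And>S i j. S \<in> F \<Longrightarrow> i \<in> S \<Longrightarrow>
      C S j - C S i / w S i * w S j = C (S - {i}) j - C S i / w S i * w (S - {i}) j"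
begin

lemma w_Sk_pos: "k \<in> {1..card N} \<Longrightarrow> j \<in> N \<Longrightarrow> 0 < w (Sk k) j"
  by (simp add: w_pos Sk_mem_F)

lemma increment_sum_eq_ratio:
  assumes k: "k \<in> {1..card N}"
    and y: "y k = (C N (\<pi> k) - (\<Sum>l\<in>{1..<k}. y l * w (Sk l) (\<pi> k))) / w (Sk k) (\<pi> k)"
    and reduced: "C N (\<pi> k) - (\<Sum>l\<in>{1..<k}. y l * w (Sk l) (\<pi> k))
                  = C (Sk k) (\<pi> k) - (\<Sum>l\<in>{1..<k}. y l) * w (Sk k) (\<pi> k)"
  shows "(\<Sum>l\<in>{1..k}. y l) = C (Sk k) (\<pi> k) / w (Sk k) (\<pi> k)"
proof -
  have "0 < w (Sk k) (\<pi> k)"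
    using k by (simp add: w_Sk_pos pi_mem)
  moreover have "(\<Sum>l\<in>{1..k}. y l) = (\<Sum>l\<in>{1..<k}. y l) + y k"
    using k by (simp add: sum.atLeastLessThan_Suc flip: atLeastLessThanSuc_atLeastAtMost)
  ultimately show ?thesis
    using y unfolding reduced by (simp add: field_simps)
qed

lemma reduced_cost_along_greedy:
  assumes y: "\<And>k. k \<in> {1..card N} \<Longrightarrow>
      y k = (C N (\<pi> k) - (\<Sum>l\<in>{1..<k}. y l * w (Sk l) (\<pi> k))) / w (Sk k) (\<pi> k)"
  shows "k \<in> {1..card N} \<Longrightarrow>
    C N j - (\<Sum>l\<in>{1..<k}. y l * w (Sk l) j) = C (Sk k) j - (\<Sum>l\<in>{1..<k}. y l) * w (Sk k) j"
proof (induction k arbitrary: j)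
  case (Suc k)
  show ?case
  proof (cases "k = 0")
    case True
    then show ?thesis
      by (simp add: Sk_def)
  next
    case False
    with Suc.prems have k: "k \<in> {1..card N}"
      by simp
    let ?r = "C (Sk k) (\<pi> k) / w (Sk k) (\<pi> k)"
    have sum_eq: "(\<Sum>l\<in>{1..<Suc k}. y l) = ?r"
      using increment_sum_eq_ratio[OF k y[OF k] Suc.IH[OF k]] by (simp add: atLeastLessThanSuc_atLeastAtMost)
    have "C N j - (\<Sum>l\<in>{1..<Suc k}. y l * w (Sk l) j)
        = C N j - (\<Sum>l\<in>{1..<k}. y l * w (Sk l) j) - y k * w (Sk k) j"
      using k by (simp add: sum.atLeastLessThan_Suc)
    also have "\<dots> = C (Sk k) j - (\<Sum>l\<in>{1..<Suc k}. y l) * w (Sk k) j"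
      using Suc.IH[OF k, of j] k by (simp add: sum.atLeastLessThan_Suc algebra_simps)
    also have "\<dots> = C (Sk (Suc k)) j - (\<Sum>l\<in>{1..<Suc k}. y l) * w (Sk (Suc k)) j"
      unfolding sum_eq using reduced_cost_remove[OF Sk_mem_F[OF k] pi_mem_Sk[OF k], of j] k
      by (simp add: Sk_Suc)
    finally show ?thesis .
  qed
qed simp

lemma index_eq_ratio:
  assumes "k \<in> {1..card N}"
  shows "\<nu> (\<pi> k) = C (Sk k) (\<pi> k) / w (Sk k) (\<pi> k)"
proof -
  obtain y where
    y: "\<And>k. k \<in> {1..card N} \<Longrightarrow>
       y k = (C N (\<pi> k) - (\<Sum>l\<in>{1..<k}. y l * w (Sk l) (\<pi> k))) / w (Sk k) (\<pi> k)"
    and \<nu>: "\<And>k. k \<in> {1..card N} \<Longrightarrow> \<nu> (\<pi> k) = (\<Sum>l\<in>{1..k}. y l)"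
    using output_increments by metis
  show ?thesis
    using increment_sum_eq_ratio[OF assms y[OF assms] reduced_cost_along_greedy[OF y assms]]
    by (simp add: \<nu>[OF assms])
qed

context
  assumes index_mono: "\<And>k l. 1 \<le> k \<Longrightarrow> k \<le> l \<Longrightarrow> l \<le> card N \<Longrightarrow> \<nu> (\<pi> k) \<le> \<nu> (\<pi> l)"
    and w_mono: "\<And>S T j. S \<in> F \<Longrightarrow> T \<in> F \<Longrightarrow> j \<in> S \<Longrightarrow> S \<subset> T \<Longrightarrow> w S j \<le> w T j"
begin

lemma reduced_cost_nonpos:
  assumes k: "k \<in> {1..card N}" and m: "1 \<le> m" "m \<le> k"
  shows "C (Sk m) (\<pi> k) - \<nu> (\<pi> k) * w (Sk m) (\<pi> k) \<le> 0"
  using m(2)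
proof (induction m rule: inc_induct)
  case base
  show ?case
    using index_eq_ratio[OF k] w_Sk_pos[OF k pi_mem[OF k]] by simp
next
  case (step l)
  let ?j = "\<pi> k"
  have l: "l \<in> {1..card N}" and Suc_l: "Suc l \<in> {1..card N}"
    using step.hyps m(1) k by auto
  have "C (Sk l) ?j - \<nu> (\<pi> l) * w (Sk l) ?j
      = C (Sk (Suc l)) ?j - \<nu> (\<pi> l) * w (Sk (Suc l)) ?j"
    using reduced_cost_remove[OF Sk_mem_F[OF l] pi_mem_Sk[OF l]] l
    by (simp add: index_eq_ratio Sk_Suc)
  then have "C (Sk l) ?j - \<nu> ?j * w (Sk l) ?j
      = (C (Sk (Suc l)) ?j - \<nu> ?j * w (Sk (Suc l)) ?j)
        + (\<nu> (\<pi> l) - \<nu> ?j) * (w (Sk l) ?j - w (Sk (Suc l)) ?j)"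
    by (simp add: algebra_simps)
  moreover have "\<nu> (\<pi> l) \<le> \<nu> ?j"
    using index_mono step.hyps m(1) k by auto
  moreover have "w (Sk (Suc l)) ?j \<le> w (Sk l) ?j"
  proof (rule w_mono[OF Sk_mem_F[OF Suc_l] Sk_mem_F[OF l]])
    show "?j \<in> Sk (Suc l)"
      using pi_mem_Sk_iff[OF k Suc_l] step.hyps by simp
    show "Sk (Suc l) \<subset> Sk l"
      using Sk_Suc[of l] pi_mem_Sk[OF l] l by auto
  qed
  ultimately show ?case
    using step.IH by (smt (verit) mult_nonpos_nonneg)
qed

lemma ratio_le_index:
  assumes "k \<in> {1..card N}" and "1 \<le> m" "m \<le> k"
  shows "C (Sk m) (\<pi> k) / w (Sk m) (\<pi> k) \<le> \<nu> (\<pi> k)"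
proof -
  have "0 < w (Sk m) (\<pi> k)"
    using assms by (simp add: w_Sk_pos pi_mem)
  then show ?thesis
    using reduced_cost_nonpos[OF assms] by (simp add: divide_le_eq)
qed

lemma index_eq_Max_ratio:
  assumes j: "j \<in> N"
  shows "\<nu> j = Max {C S j / w S j | S. S \<in> (\<lambda>k. \<pi> ` {k..card N}) ` {1..card N} \<and> j \<in> S}"
proof -
  have family: "(\<lambda>k. \<pi> ` {k..card N}) ` {1..card N} = Sk ` {1..card N}"
    using Sk_eq_image by (auto simp: image_def)
  obtain k where k: "k \<in> {1..card N}" and j_eq: "j = \<pi> k"
    using j image_pi by blast
  show ?thesis
    unfolding family
  proof (rule Max_eqI[symmetric])
    show "finite {C S j / w S j | S. S \<in> Sk ` {1..card N} \<and> j \<in> S}"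
      by simp
    show "y \<le> \<nu> j" if "y \<in> {C S j / w S j | S. S \<in> Sk ` {1..card N} \<and> j \<in> S}" for y
      using that ratio_le_index[OF k] pi_mem_Sk_iff[OF k] unfolding j_eq by auto
    show "\<nu> j \<in> {C S j / w S j | S. S \<in> Sk ` {1..card N} \<and> j \<in> S}"
      using k index_eq_ratio[OF k] pi_mem_Sk[OF k] unfolding j_eq by blast
  qed
qed

end

end

theorem theorem11:
  fixes \<beta> :: real
    and P0 P1 :: "'s::finite \<Rightarrow> 's \<Rightarrow> real"
    and h0 h1 \<theta> :: "'s \<Rightarrow> real"
    and N1 :: "'s set"
    and F :: "'s set set"
    and \<pi> :: "nat \<Rightarrow> 's"
    and \<nu> :: "'s \<Rightarrow> real"
  assumes beta: "0 < \<beta>" "\<beta> < 1"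
    and P0_nonneg: "\<And>i j. 0 \<le> P0 i j" and P0_stoch: "\<And>i. (\<Sum>j\<in>UNIV. P0 i j) = 1"
    and P1_nonneg: "\<And>i j. 0 \<le> P1 i j" and P1_stoch: "\<And>i. (\<Sum>j\<in>UNIV. P1 i j) = 1"
    and N1_same: "\<And>i j. i \<in> N1 \<Longrightarrow> P1 i j = P0 i j"
    and theta_pos: "\<And>j. 0 < \<theta> j"
    and F: "set_system (- N1) F"
    and PCL_i: "\<And>S j. S \<in> F \<Longrightarrow> j \<in> - N1 \<Longrightarrow> 0 < wS \<beta> P0 P1 \<theta> N1 S j"
    and AG: "AG_output (- N1) F (wS \<beta> P0 P1 \<theta> N1) (hhat0 \<beta> P0 P1 h0 h1) \<pi> \<nu>"
    and PCL_ii: "\<And>k l. 1 \<le> k \<Longrightarrow> k \<le> l \<Longrightarrow> l \<le> card (- N1) \<Longrightarrow> \<nu> (\<pi> k) \<le> \<nu> (\<pi> l)"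
    and w_mono: "\<And>S T j. S \<in> F \<Longrightarrow> T \<in> F \<Longrightarrow> j \<in> S \<Longrightarrow> S \<subset> T \<Longrightarrow>
                   wS \<beta> P0 P1 \<theta> N1 S j \<le> wS \<beta> P0 P1 \<theta> N1 T j"
  shows "\<forall>j \<in> - N1. \<nu> j = Max {(vS \<beta> P0 P1 h0 h1 N1 (S - {j}) j - vS \<beta> P0 P1 h0 h1 N1 S j)
                                 / (bS \<beta> P0 P1 \<theta> N1 S j - bS \<beta> P0 P1 \<theta> N1 (S - {j}) j) | S.
                               S \<in> (\<lambda>k. \<pi> ` {k..card (- N1)}) ` {1..card (- N1)} \<and> j \<in> S}"
proof
  interpret restless_bandit P0 P1 \<beta> h0 h1 \<theta> N1
    by unfold_locales (use beta P0_nonneg P0_stoch P1_nonneg P1_stoch in auto)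
  have F_subset: "S \<in> F \<Longrightarrow> S \<subseteq> - N1" for S
    using F by (auto simp: set_system_def)
  interpret adaptive_greedy_marginal "- N1" F w marginal_cost \<pi> \<nu>
  proof unfold_locales
    show "AG_output (- N1) F w (marginal_cost (- N1)) \<pi> \<nu>"
      using AG by (simp add: hhat0_eq_marginal_cost)
    show "marginal_cost S j - marginal_cost S i / w S i * w S j
        = marginal_cost (S - {i}) j - marginal_cost S i / w S i * w (S - {i}) j"
      if "S \<in> F" "i \<in> S" for S i j
      using that F_subset PCL_i by (intro marginal_cost_remove) (auto simp: less_le)
  qed (use F PCL_i in auto)
  let ?family = "(\<lambda>k. \<pi> ` {k..card (- N1)}) ` {1..card (- N1)}"
  fix j
  assume j: "j \<in> - N1"
  have rate: "(v (S - {j}) j - v S j) / (b S j - b (S - {j}) j) = marginal_cost S j / w S j"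
    if "S \<in> ?family" "j \<in> S" for S
    using that j F_subset PCL_i image_pi_from_mem_F by (intro marginal_rate_eq) auto
  have "{(v (S - {j}) j - v S j) / (b S j - b (S - {j}) j) | S. S \<in> ?family \<and> j \<in> S}
      = {marginal_cost S j / w S j | S. S \<in> ?family \<and> j \<in> S}"
    by (intro Collect_cong ex_cong1) (metis rate)
  then show "\<nu> j = Max {(v (S - {j}) j - v S j) / (b S j - b (S - {j}) j) | S. S \<in> ?family \<and> j \<in> S}"
    using index_eq_Max_ratio[OF PCL_ii w_mono j] by simp
qed

end
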